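(* For each $y$ in the peak-insertion set of an avoider $p$ on $[n]$, there is exactly one position $i$ such that $q:=p\oplus_{i}y$ satisfies (i) $q$ is an avoider, (ii) the peak blue entry of $q$ is $y$, and (iii) $q$ has exactly one more blue entry than $p$. Also, for $y$ not in the peak-insertion set of $p$, there is no such $i$.
   Context: Permutations are standard permutations written in one-line form. A permutation on $[n]$ is indecomposable if there is no $k$ with $1\le k<n$ such that its first $k$ entries are exactly $\{1,\dots,k\}$ (the empty permutation is not indecomposable). An "avoider" means an indecomposable permutation avoiding both patterns $3241$ and $4321$. A blue (key-2) entry is an entry that serves as the "2" in a $321$ pattern or in a $4312$ pattern. For a $321$-containing avoider, let $a$ be the last (rightmost) entry serving as the "1" of a $321$ pattern; the peak blue entry is the larger of $a$ and its immediate predecessor. Inserting $y$ at position $i$ into $p$, written $p\oplus_i y$, means incrementing by $1$ each entry $\ge y$ and then placing $y$ in position $i$ (e.g. $3142\oplus_4 2=41523$). LRMax means left-to-right maximum. To a $321$-containing permutation $p$ on $[n]$ associate the triple $(a,b,c)$: $a$ is the last "1" of a $321$ in $p$, $b$ is the rightmost entry to the left of $a$ that exceeds $a$, and $c$ is the first non-LRMax entry after $a$ ($c=\infty$ if there is none). Its peak-insertion set is $[a+1,b+1]\cup[c+1,n]$, where $[c+1,n]=\emptyset$ if $c=\infty$. For a $321$-avoiding permutation on $[n]$, set $c=1$ and define its peak-insertion set to be $[2,n]$. *)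

theory Defs
  imports Main
begin

text \<open>Permutations in one-line form are lists of naturals; a permutation on [n]
  is a list of length n whose entries are exactly 1..n.  Positions are 0-indexed
  internally.\<close>

definition is_perm :: "nat list \<Rightarrow> bool" where
  "is_perm p \<longleftrightarrow> distinct p \<and> set p = {1..length p}"

definition indecomposable :: "nat list \<Rightarrow> bool" where
  "indecomposable p \<longleftrightarrow> is_perm p \<and> length p \<ge> 1 \<and>
     \<not> (\<exists>k. 1 \<le> k \<and> k < length p \<and> set (take k p) = {1..k})"

definition occ :: "nat list \<Rightarrow> nat list \<Rightarrow> nat list \<Rightarrow> bool" where
  "occ p s idx \<longleftrightarrow> length idx = length s \<and> sorted_wrt (<) idx \<and>
     (\<forall>j \<in> set idx. j < length p) \<and>
     (\<forall>u < length s. \<forall>v < length s. p ! (idx ! u) < p ! (idx ! v) \<longleftrightarrow> s ! u < s ! v)"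

definition contains :: "nat list \<Rightarrow> nat list \<Rightarrow> bool" where
  "contains p s \<longleftrightarrow> (\<exists>idx. occ p s idx)"

definition avoider :: "nat list \<Rightarrow> bool" where
  "avoider p \<longleftrightarrow> indecomposable p \<and> \<not> contains p [3,2,4,1] \<and> \<not> contains p [4,3,2,1]"

definition blue_pos :: "nat list \<Rightarrow> nat \<Rightarrow> bool" where
  "blue_pos p j \<longleftrightarrow> (\<exists>idx. occ p [3,2,1] idx \<and> idx ! 1 = j) \<or>
                    (\<exists>idx. occ p [4,3,1,2] idx \<and> idx ! 3 = j)"

definition num_blue :: "nat list \<Rightarrow> nat" where
  "num_blue p = card {j. j < length p \<and> blue_pos p j}"

definition one321_pos :: "nat list \<Rightarrow> nat \<Rightarrow> bool" where
  "one321_pos p j \<longleftrightarrow> (\<exists>idx. occ p [3,2,1] idx \<and> idx ! 2 = j)"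

text \<open>Position of the last "1" of a 321 (meaningful when p contains 321).\<close>
definition last1_pos :: "nat list \<Rightarrow> nat" where
  "last1_pos p = Max {j. j < length p \<and> one321_pos p j}"

definition peak_blue :: "nat list \<Rightarrow> nat" where
  "peak_blue p = max (p ! last1_pos p) (p ! (last1_pos p - 1))"

definition trip_a :: "nat list \<Rightarrow> nat" where
  "trip_a p = p ! last1_pos p"

definition trip_b :: "nat list \<Rightarrow> nat" where
  "trip_b p = p ! (Max {k. k < last1_pos p \<and> p ! k > trip_a p})"

definition non_lrmax_pos :: "nat list \<Rightarrow> nat \<Rightarrow> bool" where
  "non_lrmax_pos p k \<longleftrightarrow> (\<exists>k' < k. p ! k' > p ! k)"

text \<open>c as an option: None encodes c = infinity.\<close>
definition trip_c :: "nat list \<Rightarrow> nat option" where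
  "trip_c p = (if \<exists>k. last1_pos p < k \<and> k < length p \<and> non_lrmax_pos p k
     then Some (p ! (LEAST k. last1_pos p < k \<and> k < length p \<and> non_lrmax_pos p k))
     else None)"

definition peak_set :: "nat list \<Rightarrow> nat set" where
  "peak_set p = (if contains p [3,2,1]
     then {trip_a p + 1 .. trip_b p + 1} \<union>
          (case trip_c p of None \<Rightarrow> {} | Some c \<Rightarrow> {c + 1 .. length p})
     else {2 .. length p})"

text \<open>Insertion p \<oplus>_i y, with i a 1-indexed position (y becomes the i-th entry).\<close>
definition ins :: "nat list \<Rightarrow> nat \<Rightarrow> nat \<Rightarrow> nat list" where
  "ins p i y = (let p' = map (\<lambda>x. if x \<ge> y then x + 1 else x) p
                in take (i - 1) p' @ y # drop (i - 1) p')"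

lemma ins_example: "ins [3,1,4,2] 4 2 = [4,1,5,2,3]"
  by (simp add: ins_def)

end

theory Submission
  imports Defs
begin

text \<open>Let a be the last 1 of a 321 in p, at position l, and b the rightmost larger entry left of it.
  Because p avoids 4321 and 3241, b is itself the 2 of a 321 whose 1 is a, everything to the
  right of a exceeds b, and everything strictly between b and a is smaller than a.

  If inserting y produces an avoider q whose peak blue entry is y, then y is either the new
  last 1 of a 321 (it then sits right after a, with a < y \<le> b), or it is the 2 of a 321 whose
  1 is the entry right after y, which is the new last 1.  In the second case that entry is a
  non-LRMax entry of p below y at or after l, and it is the rightmost such entry, since a later
  one would give a later 1 of a 321.  So at most one position is possible, and it exists exactly
  when y lies in the peak-insertion set.  Conversely, inserting y at this position creates no
  4321 or 3241, keeps the permutation indecomposable, and adds exactly one blue entry, y itself: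
  every other pattern through y can be moved onto an old entry using the same avoidance facts.\<close>

lemmas occ_simps = occ_def numeral_eq_Suc All_less_Suc2 length_Suc_conv

lemma occ_321_iff: "occ p [3,2,1] idx \<longleftrightarrow>
    (\<exists>i j k. idx = [i,j,k] \<and> i<j \<and> j<k \<and> k<length p \<and> p!j < p!i \<and> p!k < p!j)"
  by (auto simp: occ_simps)

lemma occ_4321_iff: "occ p [4,3,2,1] idx \<longleftrightarrow>
    (\<exists>i j k m. idx = [i,j,k,m] \<and> i<j \<and> j<k \<and> k<m \<and> m<length p \<and>
      p!j < p!i \<and> p!k < p!j \<and> p!m < p!k)"
  by (auto simp: occ_simps)

lemma occ_3241_iff: "occ p [3,2,4,1] idx \<longleftrightarrow>
    (\<exists>i j k m. idx = [i,j,k,m] \<and> i<j \<and> j<k \<and> k<m \<and> m<length p \<and>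
      p!j < p!i \<and> p!i < p!k \<and> p!m < p!j)"
  by (auto simp: occ_simps)

lemma occ_4312_iff: "occ p [4,3,1,2] idx \<longleftrightarrow>
    (\<exists>i j k m. idx = [i,j,k,m] \<and> i<j \<and> j<k \<and> k<m \<and> m<length p \<and>
      p!j < p!i \<and> p!m < p!j \<and> p!k < p!m)"
  by (auto simp: occ_simps)

lemma ex_list3_conj_iff:
  "(\<exists>idx. (\<exists>i j k. idx = [i,j,k] \<and> P i j k) \<and> Q idx) \<longleftrightarrow> (\<exists>i j k. P i j k \<and> Q [i,j,k])"
  by blast

lemma ex_list4_conj_iff:
  "(\<exists>idx. (\<exists>i j k m. idx = [i,j,k,m] \<and> P i j k m) \<and> Q idx) \<longleftrightarrow>
   (\<exists>i j k m. P i j k m \<and> Q [i,j,k,m])"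
  by blast

lemma contains_321_iff: "contains p [3,2,1] \<longleftrightarrow>
    (\<exists>i j k. i<j \<and> j<k \<and> k<length p \<and> p!j < p!i \<and> p!k < p!j)"
  unfolding contains_def occ_321_iff by blast

lemma contains_4321_iff: "contains p [4,3,2,1] \<longleftrightarrow>
    (\<exists>i j k m. i<j \<and> j<k \<and> k<m \<and> m<length p \<and> p!j < p!i \<and> p!k < p!j \<and> p!m < p!k)"
  unfolding contains_def occ_4321_iff by blast

lemma contains_3241_iff: "contains p [3,2,4,1] \<longleftrightarrow>
    (\<exists>i j k m. i<j \<and> j<k \<and> k<m \<and> m<length p \<and> p!j < p!i \<and> p!i < p!k \<and> p!m < p!j)"
  unfolding contains_def occ_3241_iff by blast

lemma blue_pos_iff: "blue_pos p x \<longleftrightarrow>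
    (\<exists>i k. i<x \<and> x<k \<and> k<length p \<and> p!x < p!i \<and> p!k < p!x) \<or>
    (\<exists>i j k. i<j \<and> j<k \<and> k<x \<and> x<length p \<and> p!j < p!i \<and> p!x < p!j \<and> p!k < p!x)"
  unfolding blue_pos_def occ_321_iff occ_4312_iff ex_list3_conj_iff ex_list4_conj_iff by auto

lemma one321_pos_iff: "one321_pos p x \<longleftrightarrow>
    (\<exists>i j. i<j \<and> j<x \<and> x<length p \<and> p!j < p!i \<and> p!x < p!j)"
  unfolding one321_pos_def occ_321_iff ex_list3_conj_iff by auto

lemma last1_pos_props:
  assumes "contains r [3,2,1]"
  shows "last1_pos r < length r" "one321_pos r (last1_pos r)"
    "\<And>j. one321_pos r j \<Longrightarrow> j \<le> last1_pos r"
proof -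
  have fin: "finite {j. j < length r \<and> one321_pos r j}" by simp
  obtain i j k where "i<j" "j<k" "k<length r" "r!j<r!i" "r!k<r!j"
    using assms contains_321_iff by blast
  then have "k \<in> {j. j < length r \<and> one321_pos r j}" using one321_pos_iff by auto
  then have "last1_pos r \<in> {j. j < length r \<and> one321_pos r j}"
    unfolding last1_pos_def using Max_in[OF fin] by blast
  then show "last1_pos r < length r" "one321_pos r (last1_pos r)" by auto
  fix j assume "one321_pos r j"
  then have "j \<in> {j. j < length r \<and> one321_pos r j}" using one321_pos_iff by auto
  then show "j \<le> last1_pos r" unfolding last1_pos_def using Max_ge[OF fin] by blast
qed

lemma last1_pos_eqI:
  "contains r [3,2,1] \<Longrightarrow> one321_pos r L \<Longrightarrow> (\<And>x. one321_pos r x \<Longrightarrow> x \<le> L) \<Longrightarrow> last1_pos r = L"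
  using last1_pos_props[of r] by (meson le_antisym)

lemma is_perm_take_eq_iff:
  assumes "is_perm p" "k \<le> length p"
  shows "set (take k p) = {1..k} \<longleftrightarrow> (\<forall>i<k. \<forall>j. k \<le> j \<longrightarrow> j < length p \<longrightarrow> p!i < p!j)"
proof
  assume H: "set (take k p) = {1..k}"
  show "\<forall>i<k. \<forall>j. k \<le> j \<longrightarrow> j < length p \<longrightarrow> p!i < p!j"
  proof (intro allI impI)
    fix i j assume ij: "i<k" "k\<le>j" "j<length p"
    have "p!i \<in> set (take k p)" using ij assms(2) by (auto simp: in_set_conv_nth intro!: exI[of _ i])
    then have "p!i \<le> k" using H by auto
    moreover have "p!j \<in> set (drop k p)" using ij by (auto simp: in_set_conv_nth intro!: exI[of _ "j-k"])
    moreover have "set (take k p) \<inter> set (drop k p) = {}" using assms(1) unfolding is_perm_def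
      by (metis append_take_drop_id distinct_append)
    moreover have "p!j \<in> {1..length p}" using assms(1) ij unfolding is_perm_def by auto
    ultimately show "p!i < p!j" using H by fastforce
  qed
next
  assume H: "\<forall>i<k. \<forall>j. k \<le> j \<longrightarrow> j < length p \<longrightarrow> p!i < p!j"
  have card_take: "card (set (take k p)) = k"
    using assms distinct_card[of "take k p"] unfolding is_perm_def by simp
  have "set (take k p) \<subseteq> {1..k}"
  proof
    fix x assume xin: "x \<in> set (take k p)"
    then obtain i where i: "i < k" "p!i = x" using assms(2) by (auto simp: in_set_conv_nth)
    have x: "1 \<le> x" "x \<le> length p" using in_set_takeD[OF xin] assms(1) unfolding is_perm_def by auto
    \<comment> \<open>every value up to x sits left of position k, so there are at least x of them\<close>
    have "{1..x} \<subseteq> set (take k p)"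
    proof
      fix v assume v: "v \<in> {1..x}"
      then have "v \<in> set p" using x assms(1) unfolding is_perm_def by auto
      then obtain j where j: "j < length p" "p!j = v" by (auto simp: in_set_conv_nth)
      have "j < k" using H i j v by (metis atLeastAtMost_iff leD not_le_imp_less)
      then show "v \<in> set (take k p)" using j assms(2) by (auto simp: in_set_conv_nth intro!: exI[of _ j])
    qed
    then have "x \<le> k" using card_mono[of "set (take k p)" "{1..x}"] card_take by simp
    then show "x \<in> {1..k}" using x by simp
  qed
  then show "set (take k p) = {1..k}" using card_subset_eq[of "{1..k}"] card_take by simp
qed

definition bump :: "nat \<Rightarrow> nat \<Rightarrow> nat" where
  "bump y v = (if y \<le> v then Suc v else v)"

lemma bump_less_bump_iff [simp]: "bump y u < bump y v \<longleftrightarrow> u < v"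
  and bump_less_iff [simp]: "bump y u < y \<longleftrightarrow> u < y"
  and less_bump_iff [simp]: "y < bump y u \<longleftrightarrow> y \<le> u"
  and bump_neq [simp]: "bump y u \<noteq> y" "y \<noteq> bump y u"
  unfolding bump_def by auto

lemma ins_conv_bump: "ins p (Suc t) y = take t (map (bump y) p) @ y # drop t (map (bump y) p)"
proof -
  have "(\<lambda>x. if y \<le> x then x + 1 else x) = bump y" unfolding bump_def by auto
  then show ?thesis unfolding ins_def by (simp add: Let_def)
qed

lemma inj_bump: "inj (bump y)"
  unfolding bump_def inj_def by auto

lemma bump_image:
  assumes "1 \<le> y" "y \<le> Suc m"
  shows "bump y ` {1..m} = {1..Suc m} - {y}"
proof
  show "{1..Suc m} - {y} \<subseteq> bump y ` {1..m}"
  proof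
    fix v assume v: "v \<in> {1..Suc m} - {y}"
    show "v \<in> bump y ` {1..m}"
    proof (cases "v < y")
      case True then show ?thesis using v assms unfolding bump_def by (intro image_eqI[of _ _ v]) auto
    next
      case False then show ?thesis using v assms unfolding bump_def by (intro image_eqI[of _ _ "v - 1"]) auto
    qed
  qed
qed (use assms in \<open>auto simp: bump_def\<close>)

lemma length_ins: "t \<le> length p \<Longrightarrow> length (ins p (Suc t) y) = Suc (length p)"
  unfolding ins_conv_bump by simp

lemma nth_ins:
  assumes "t \<le> length p" "j \<le> length p"
  shows "ins p (Suc t) y ! j =
    (if j < t then bump y (p!j) else if j = t then y else bump y (p!(j-1)))"
proof -
  consider "j < t" | "j = t" | d where "j = Suc (t + d)"
    by (metis less_imp_Suc_add linorder_neqE_nat)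
  then show ?thesis
  proof cases
    case 3
    then show ?thesis unfolding ins_conv_bump using assms by (simp add: nth_append)
  qed (use assms in \<open>simp_all add: ins_conv_bump nth_append\<close>)
qed

lemma is_perm_ins:
  assumes "is_perm p" "1 \<le> y" "y \<le> Suc (length p)" "t \<le> length p"
  shows "is_perm (ins p (Suc t) y)"
proof -
  let ?b = "map (bump y) p"
  have "distinct ?b" using assms(1) inj_on_subset[OF inj_bump] unfolding is_perm_def by (simp add: distinct_map)
  moreover have "y \<notin> set (take t ?b)" "y \<notin> set (drop t ?b)"
    using in_set_takeD[of y t ?b] in_set_dropD[of y t ?b] by auto
  ultimately have "distinct (take t ?b @ y # drop t ?b)"
    using distinct_append[of "take t ?b" "drop t ?b"] by (simp add: distinct_append)
  moreover have "set (take t ?b @ y # drop t ?b) = insert y (set ?b)"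
  proof -
    have "set (take t ?b @ y # drop t ?b) = insert y (set (take t ?b @ drop t ?b))"
      by (simp only: set_append list.set(2) Un_insert_right)
    then show ?thesis by (simp only: append_take_drop_id)
  qed
  moreover have "set ?b = {1..Suc (length p)} - {y}"
    using assms(1) bump_image[OF assms(2,3)] unfolding is_perm_def by simp
  ultimately show ?thesis unfolding is_perm_def ins_conv_bump using assms by auto
qed

locale avoider_perm =
  fixes p :: "nat list"
  assumes avoider: "avoider p"
begin

abbreviation "n \<equiv> length p"

lemma is_perm: "is_perm p"
  using avoider unfolding avoider_def indecomposable_def by auto

lemma length_pos: "1 \<le> n"
  using avoider unfolding avoider_def indecomposable_def by auto

lemma nth_bounds: "i < n \<Longrightarrow> 1 \<le> p!i \<and> p!i \<le> n"
  using is_perm unfolding is_perm_def by (metis atLeastAtMost_iff nth_mem)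

lemma nth_inj: "i < n \<Longrightarrow> j < n \<Longrightarrow> p!i = p!j \<Longrightarrow> i = j"
  using is_perm unfolding is_perm_def by (simp add: nth_eq_iff_index_eq)

lemma nth_surj: "1 \<le> v \<Longrightarrow> v \<le> n \<Longrightarrow> \<exists>i<n. p!i = v"
  using is_perm unfolding is_perm_def by (metis atLeastAtMost_iff in_set_conv_nth)

lemma no_4321:
  "i<j \<Longrightarrow> j<k \<Longrightarrow> k<m \<Longrightarrow> m<n \<Longrightarrow> p!j<p!i \<Longrightarrow> p!k<p!j \<Longrightarrow> p!m<p!k \<Longrightarrow> False"
  using avoider unfolding avoider_def contains_4321_iff by blast

lemma no_3241:
  "i<j \<Longrightarrow> j<k \<Longrightarrow> k<m \<Longrightarrow> m<n \<Longrightarrow> p!j<p!i \<Longrightarrow> p!i<p!k \<Longrightarrow> p!m<p!j \<Longrightarrow> False"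
  using avoider unfolding avoider_def contains_3241_iff by blast

lemma no_split:
  "1 \<le> k \<Longrightarrow> k < n \<Longrightarrow> \<forall>i<k. \<forall>j. k\<le>j \<longrightarrow> j<n \<longrightarrow> p!i<p!j \<Longrightarrow> False"
  using avoider is_perm_take_eq_iff[OF is_perm, of k] unfolding avoider_def indecomposable_def by auto

abbreviation "c321 \<equiv> contains p [3,2,1]"
abbreviation "l \<equiv> last1_pos p"
abbreviation "a \<equiv> p ! l"

lemmas last1_props = last1_pos_props[of p]

lemma one321_le_last1:
  "c321 \<Longrightarrow> i<j \<Longrightarrow> j<k \<Longrightarrow> k<n \<Longrightarrow> p!j<p!i \<Longrightarrow> p!k<p!j \<Longrightarrow> k \<le> l"
  using last1_props(3) one321_pos_iff by blast

lemma one321_at_last1E: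
  assumes c321
  obtains i j where "i<j" "j<l" "p!j<p!i" "a<p!j"
  using last1_props[OF assms] one321_pos_iff by blast

definition "pos_b = Max {k. k < l \<and> a < p!k}"
abbreviation "b \<equiv> p ! pos_b"

lemma pos_b_props:
  assumes c321
  shows "pos_b < l" "a < b" "\<And>k. k < l \<Longrightarrow> a < p!k \<Longrightarrow> k \<le> pos_b"
proof -
  have fin: "finite {k. k < l \<and> a < p!k}" by simp
  obtain i j where "i<j" "j<l" "p!j<p!i" "a<p!j" using one321_at_last1E[OF assms] .
  then have "j \<in> {k. k < l \<and> a < p!k}" by auto
  then have "pos_b \<in> {k. k < l \<and> a < p!k}" unfolding pos_b_def using Max_in[OF fin] by blast
  then show "pos_b < l" "a < b" by auto
  fix k assume "k < l" "a < p!k"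
  then show "k \<le> pos_b" unfolding pos_b_def using Max_ge[OF fin] by blast
qed

lemma less_a_between_b_and_a: "c321 \<Longrightarrow> pos_b < k \<Longrightarrow> k < l \<Longrightarrow> p!k < a"
  using pos_b_props(3)[of k] nth_inj[of k l] last1_props(1) by fastforce

lemma two_before_last1_le_b:
  assumes c321 "i < j" "j < l" "p!j < p!i" "a < p!j"
  shows "p!j \<le> b"
proof (cases "j = pos_b")
  case False
  then have "j < pos_b" using pos_b_props(3)[OF assms(1,3,5)] by simp
  then show ?thesis
    using no_4321[of i j pos_b l] assms pos_b_props(1,2)[OF assms(1)] last1_props(1)[OF assms(1)]
    by (meson linorder_not_less)
qed simp

lemma larger_before_pos_b:
  assumes c321
  obtains i where "i < pos_b" "b < p!i"
proof -
  obtain i j where ij: "i<j" "j<l" "p!j<p!i" "a<p!j" using one321_at_last1E[OF assms] .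
  have jb: "j \<le> pos_b" "pos_b < l" "l < n"
    using pos_b_props[OF assms] ij last1_props(1)[OF assms] by auto
  show ?thesis
  proof (cases "j = pos_b")
    case True then show ?thesis using that ij by auto
  next
    case False
    then have "j < pos_b" using jb by simp
    moreover have "p!j < b"
      using two_before_last1_le_b[OF assms ij] nth_inj[of j pos_b] \<open>j < pos_b\<close> jb by fastforce
    moreover have "\<not> p!i < b"
      using no_3241[of i j pos_b l] ij \<open>j < pos_b\<close> jb pos_b_props(2)[OF assms] by blast
    moreover have "p!i \<noteq> b" using nth_inj[of i pos_b] ij \<open>j < pos_b\<close> jb by auto
    ultimately show ?thesis using that[of i] ij(1) by simp
  qed
qed

lemma greater_b_after_last1:
  assumes c321 "l < k" "k < n"
  shows "b < p!k"
proof -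
  obtain i where i: "i < pos_b" "b < p!i" using larger_before_pos_b[OF assms(1)] .
  have "pos_b < l" using pos_b_props(1)[OF assms(1)] .
  then have "\<not> p!k < b" "p!k \<noteq> b"
    using one321_le_last1[OF assms(1), of i pos_b k] i assms nth_inj[of k pos_b] by auto
  then show ?thesis by simp
qed

lemma b_less_length: "c321 \<Longrightarrow> b < n"
  using larger_before_pos_b pos_b_props(1) last1_props(1) nth_bounds
  by (metis dual_order.strict_trans less_le_trans)

text \<open>The paper's c is p!pos_c, the first non-LRMax entry after a; c = \<infinity> means \<not> has_c.\<close>
abbreviation "has_c \<equiv> \<exists>k. l < k \<and> k < n \<and> non_lrmax_pos p k"
definition "pos_c = (LEAST k. l < k \<and> k < n \<and> non_lrmax_pos p k)"

lemma pos_c_props: "has_c \<Longrightarrow> l < pos_c \<and> pos_c < n \<and> non_lrmax_pos p pos_c"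
  unfolding pos_c_def by (rule LeastI_ex)

lemma pos_c_le: "l < k \<Longrightarrow> k < n \<Longrightarrow> non_lrmax_pos p k \<Longrightarrow> pos_c \<le> k"
  unfolding pos_c_def by (rule Least_le) simp

lemma peak_set_321:
  assumes c321
  shows "peak_set p = {Suc a .. Suc b} \<union> (if has_c then {Suc (p!pos_c) .. n} else {})"
  using assms unfolding peak_set_def trip_c_def trip_a_def trip_b_def pos_c_def pos_b_def
  by (cases has_c) auto

lemma peak_set_no_321: "\<not> c321 \<Longrightarrow> peak_set p = {2..n}"
  unfolding peak_set_def by simp

lemma peak_set_bounds:
  assumes "y \<in> peak_set p"
  shows "2 \<le> y" "y \<le> n"
proof -
  have "2 \<le> y \<and> y \<le> n"
  proof (cases c321)
    case c: True
    have "1 \<le> a" "b < n" using nth_bounds last1_props(1)[OF c] b_less_length[OF c] by auto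
    moreover have "1 \<le> p!pos_c" if has_c using nth_bounds pos_c_props[OF that] by auto
    ultimately show ?thesis using assms peak_set_321[OF c] by (cases has_c) auto
  qed (use assms peak_set_no_321 in auto)
  then show "2 \<le> y" "y \<le> n" by auto
qed

lemma large_before_small:
  assumes "2 \<le> y" "y \<le> n"
  obtains i j where "i < j" "j < n" "y \<le> p!i" "p!j < y"
proof -
  have "\<exists>i j. i < j \<and> j < n \<and> y \<le> p!i \<and> p!j < y"
  proof (rule ccontr)
    assume none: "\<not> ?thesis"
    have "\<exists>j. j < n \<and> y \<le> p!j" using nth_surj[of y] assms by auto
    \<comment> \<open>the entries below y would form a proper prefix, split off at the first entry \<ge> y\<close>
    define K where "K = (LEAST j. j < n \<and> y \<le> p!j)"
    have K: "K < n" "y \<le> p!K" using LeastI_ex[OF \<open>\<exists>j. _\<close>] unfolding K_def by auto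
    have before: "p!i < y" if "i < K" for i
      using not_less_Least[OF that[unfolded K_def]] that K by auto
    have after: "y \<le> p!j" if "K \<le> j" "j < n" for j
    proof (rule ccontr)
      assume "\<not> y \<le> p!j"
      then have "K < j" using K(2) that(1) by (cases "K = j") auto
      moreover have "p!j < y" using \<open>\<not> y \<le> p!j\<close> by simp
      ultimately show False using none K(2) that(2) by blast
    qed
    obtain r where "r < n" "p!r = 1" using nth_surj[of 1] length_pos by auto
    then have "1 \<le> K" using after[of r] assms by fastforce
    then show False using no_split[of K] before after K by fastforce
  qed
  then show ?thesis using that by blast
qed

abbreviation after_a :: "nat \<Rightarrow> bool" where
  "after_a y \<equiv> c321 \<and> a < y \<and> y \<le> b"

text \<open>t is the 0-indexed position of y in the permutation obtained by inserting y.
  In the first case y goes right after a and becomes the new last 1 of a 321; in the second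
  it goes right before the non-LRMax entry p!t, which becomes the new last 1, with y as its 2.\<close>
definition admissible :: "nat \<Rightarrow> nat \<Rightarrow> bool" where
  "admissible y t \<longleftrightarrow> (after_a y \<and> t = Suc l) \<or>
    (\<not> after_a y \<and> t < n \<and> (c321 \<longrightarrow> l \<le> t) \<and> non_lrmax_pos p t \<and> p!t < y \<and>
     (\<forall>k. t < k \<longrightarrow> k < n \<longrightarrow> non_lrmax_pos p k \<longrightarrow> y \<le> p!k))"

lemma non_lrmax_below_exists:
  assumes "y \<in> peak_set p" "\<not> after_a y"
  shows "\<exists>k<n. (c321 \<longrightarrow> l \<le> k) \<and> non_lrmax_pos p k \<and> p!k < y"
proof (cases c321)
  case False
  then have "2 \<le> y" "y \<le> n" using assms(1) peak_set_no_321 by auto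
  then obtain i j where "i < j" "j < n" "y \<le> p!i" "p!j < y" by (rule large_before_small)
  then show ?thesis using False unfolding non_lrmax_pos_def by (intro exI[of _ j]) auto
next
  case c: True
  show ?thesis
  proof (cases "has_c \<and> p!pos_c < y")
    case True
    then have "l < pos_c" "pos_c < n" "non_lrmax_pos p pos_c" using pos_c_props by blast+
    then show ?thesis using True by (intro exI[of _ pos_c]) simp
  next
    case False
    then have "y \<in> {Suc a..Suc b}" using assms(1) peak_set_321[OF c] by (cases has_c) auto
    then have "y = Suc b" using assms(2) c by auto
    moreover obtain i j where "i<j" "j<l" "p!j<p!i" "a<p!j" using one321_at_last1E[OF c] .
    then have "non_lrmax_pos p l" unfolding non_lrmax_pos_def by auto
    ultimately show ?thesis using last1_props(1)[OF c] pos_b_props(2)[OF c] by (intro exI[of _ l]) auto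
  qed
qed

lemma admissible_exists:
  assumes "y \<in> peak_set p"
  shows "\<exists>t\<le>n. admissible y t"
proof (cases "after_a y")
  case True
  then show ?thesis using last1_props(1) unfolding admissible_def by (intro exI[of _ "Suc l"]) auto
next
  case False
  define Z where "Z = {k. k < n \<and> (c321 \<longrightarrow> l \<le> k) \<and> non_lrmax_pos p k \<and> p!k < y}"
  have "finite Z" "Z \<noteq> {}" unfolding Z_def using non_lrmax_below_exists[OF assms False] by auto
  then have tZ: "Max Z \<in> Z" and t_max: "\<And>k. k \<in> Z \<Longrightarrow> k \<le> Max Z" by auto
  have "y \<le> p!k" if "Max Z < k" "k < n" "non_lrmax_pos p k" for k
  proof (rule ccontr)
    assume "\<not> y \<le> p!k"
    then have "k \<in> Z" using that tZ unfolding Z_def by auto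
    then show False using t_max that(1) by fastforce
  qed
  then have "admissible y (Max Z)" using False tZ unfolding admissible_def Z_def by simp
  moreover have "Max Z \<le> n" using tZ unfolding Z_def by simp
  ultimately show ?thesis by blast
qed

lemma admissible_unique:
  assumes "admissible y t" "admissible y t'"
  shows "t = t'"
  using assms unfolding admissible_def by (metis leD linorder_neqE_nat)

end

locale insertion = avoider_perm +
  fixes y t :: nat
  assumes y_pos: "1 \<le> y" and y_le: "y \<le> Suc n" and t_le: "t \<le> n"
begin

definition "q = ins p (Suc t) y"

definition "shift k = (if k < t then k else Suc k)"
definition "unshift x = (if x < t then x else x - 1)"

lemma length_q: "length q = Suc n"
  unfolding q_def using length_ins t_le by simp

lemma q_before: "j < t \<Longrightarrow> q!j = bump y (p!j)"
  and q_at: "q!t = y"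
  and q_after: "t < j \<Longrightarrow> j \<le> n \<Longrightarrow> q!j = bump y (p!(j-1))"
  unfolding q_def using nth_ins t_le by simp_all

lemma q_shift: "k < n \<Longrightarrow> q!(shift k) = bump y (p!k)"
  unfolding shift_def using q_before q_after by auto

lemma shift_mono: "k < k' \<Longrightarrow> shift k < shift k'"
  and shift_le: "k < n \<Longrightarrow> shift k \<le> n"
  and shift_neq: "shift k \<noteq> t"
  and shift_inj: "inj shift"
  and le_shift: "k \<le> shift k"
  and shift_le_Suc: "shift k \<le> Suc k"
  and shift_after: "t \<le> k \<Longrightarrow> shift k = Suc k"
  unfolding shift_def inj_def by auto

lemma q_unshift: "x \<le> n \<Longrightarrow> x \<noteq> t \<Longrightarrow> q!x = bump y (p!(unshift x)) \<and> unshift x < n"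
  unfolding unshift_def using q_before q_after t_le by auto

lemma unshift_mono: "x < z \<Longrightarrow> x \<noteq> t \<Longrightarrow> z \<noteq> t \<Longrightarrow> unshift x < unshift z"
  and shift_unshift: "x \<noteq> t \<Longrightarrow> shift (unshift x) = x"
  and unshift_before: "x < t \<Longrightarrow> unshift x = x"
  and unshift_after: "t < x \<Longrightarrow> unshift x = x - 1"
  unfolding unshift_def shift_def by auto

lemma q_eq_y: "x \<le> n \<Longrightarrow> q!x = y \<Longrightarrow> x = t"
  using q_unshift bump_neq by metis

lemma one321_pos_shift:
  assumes "one321_pos p k"
  shows "one321_pos q (shift k)"
proof -
  obtain i j where "i<j" "j<k" "k<n" "p!j<p!i" "p!k<p!j" using assms one321_pos_iff by blast
  then show ?thesis unfolding one321_pos_iff length_q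
    using shift_mono[of i j] shift_mono[of j k] shift_le[of k] q_shift
    by (intro exI[of _ "shift i"] exI[of _ "shift j"]) auto
qed

lemma blue_pos_shift: "blue_pos p k \<Longrightarrow> blue_pos q (shift k)"
  unfolding blue_pos_iff length_q
proof (elim disjE exE conjE)
  fix i k' assume "i < k" "k < k'" "k' < n" "p!k < p!i" "p!k' < p!k"
  then show "(\<exists>i k'. i < shift k \<and> shift k < k' \<and> k' < Suc n \<and> q!shift k < q!i \<and> q!k' < q!shift k) \<or>
    (\<exists>i j k'. i < j \<and> j < k' \<and> k' < shift k \<and> shift k < Suc n \<and>
      q!j < q!i \<and> q!shift k < q!j \<and> q!k' < q!shift k)"
    using shift_mono[of i k] shift_mono[of k k'] shift_le[of k'] q_shift
    by (intro disjI1 exI[of _ "shift i"] exI[of _ "shift k'"]) auto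
next
  fix i j k' assume "i < j" "j < k'" "k' < k" "k < n" "p!j < p!i" "p!k < p!j" "p!k' < p!k"
  then show "(\<exists>i k'. i < shift k \<and> shift k < k' \<and> k' < Suc n \<and> q!shift k < q!i \<and> q!k' < q!shift k) \<or>
    (\<exists>i j k'. i < j \<and> j < k' \<and> k' < shift k \<and> shift k < Suc n \<and>
      q!j < q!i \<and> q!shift k < q!j \<and> q!k' < q!shift k)"
    using shift_mono[of i j] shift_mono[of j k'] shift_mono[of k' k] shift_le[of k] q_shift
    by (intro disjI2 exI[of _ "shift i"] exI[of _ "shift j"] exI[of _ "shift k'"]) auto
qed

lemma q_contains_4321I:
  "i<j \<Longrightarrow> j<k \<Longrightarrow> k<m \<Longrightarrow> m \<le> n \<Longrightarrow> q!j<q!i \<Longrightarrow> q!k<q!j \<Longrightarrow> q!m<q!k \<Longrightarrow> contains q [4,3,2,1]"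
  unfolding contains_4321_iff length_q by (intro exI[of _ i] exI[of _ j] exI[of _ k] exI[of _ m]) auto

lemma q_contains_3241I:
  "i<j \<Longrightarrow> j<k \<Longrightarrow> k<m \<Longrightarrow> m \<le> n \<Longrightarrow> q!j<q!i \<Longrightarrow> q!i<q!k \<Longrightarrow> q!m<q!j \<Longrightarrow> contains q [3,2,4,1]"
  unfolding contains_3241_iff length_q by (intro exI[of _ i] exI[of _ j] exI[of _ k] exI[of _ m]) auto

end

locale peak_insertion = insertion +
  assumes q_no_4321: "\<not> contains q [4,3,2,1]"
    and q_no_3241: "\<not> contains q [3,2,4,1]"
    and q_321: "contains q [3,2,1]"
    and peak_q: "peak_blue q = y"
begin

abbreviation "L \<equiv> last1_pos q"

lemmas last1_q_props = last1_pos_props[OF q_321, unfolded length_q]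

lemma last1_q_cases: "L = t \<or> L = Suc t"
proof -
  obtain i j where "i < j" "j < L" using last1_q_props(2) one321_pos_iff by blast
  consider "q!L = y" | "q!(L-1) = y" using peak_q unfolding peak_blue_def max_def by metis
  then show ?thesis
  proof cases
    case 1 then show ?thesis using q_eq_y[of L] last1_q_props(1) by simp
  next
    case 2
    have "L - 1 \<le> n" using last1_q_props(1) by simp
    then show ?thesis using q_eq_y[of "L-1"] 2 \<open>j < L\<close> by auto
  qed
qed

lemma last1_q_at_t:
  assumes "L = t"
  shows "after_a y \<and> t = Suc l"
proof -
  obtain i j where ij: "i<j" "j<t" "q!j<q!i" "y<q!j"
    using last1_q_props(2) one321_pos_iff assms q_at by metis
  have pij: "p!j < p!i" "y \<le> p!j" using ij q_before[of i] q_before[of j] by auto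
  have "t - 1 \<le> n" "t - 1 \<noteq> t" using ij t_le by auto
  then have "q!(t-1) \<noteq> y" using q_eq_y by blast
  moreover have "q!(t-1) \<le> y" using peak_q assms q_at unfolding peak_blue_def by simp
  moreover have "q!(t-1) = bump y (p!(t-1))" using q_before[of "t-1"] ij by simp
  ultimately have "bump y (p!(t-1)) < y" by linarith
  then have a_lt_y: "p!(t-1) < y" by simp
  then have "j \<noteq> t - 1" using pij by auto
  then have j_lt: "j < t - 1" using ij(2) by linarith
  have c: c321 unfolding contains_321_iff using ij j_lt t_le pij a_lt_y
    by (intro exI[of _ i] exI[of _ j] exI[of _ "t-1"]) auto
  have "t - 1 \<le> l" using one321_le_last1[OF c ij(1) j_lt _ pij(1)] pij(2) a_lt_y ij t_le by simp
  moreover have "shift l \<le> t" using last1_q_props(3)[OF one321_pos_shift[OF last1_props(2)[OF c]]] assms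
    by simp
  then have "l < t" using shift_neq[of l] unfolding shift_def by (auto split: if_splits)
  ultimately have tl: "t = Suc l" by simp
  then have "p!j \<le> b" using two_before_last1_le_b[OF c ij(1)] j_lt pij a_lt_y by simp
  then show ?thesis using c tl a_lt_y pij by simp
qed

lemma last1_q_Suc_props:
  assumes "L = Suc t"
  shows "t < n" "p!t < y" "\<exists>i<t. y \<le> p!i" "\<And>k. t < k \<Longrightarrow> k < n \<Longrightarrow> y \<le> p!k"
proof -
  show tn: "t < n" using assms last1_q_props(1) by simp
  have "q!L \<le> y" "q!L = bump y (p!t)"
    using peak_q assms q_at q_after[of L] tn unfolding peak_blue_def by auto
  then have "bump y (p!t) < y" using bump_neq[of y "p!t"] by linarith
  then show pt: "p!t < y" by simp
  obtain i j where ij: "i<j" "j<Suc t" "q!j<q!i" "q!L<q!j"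
    using last1_q_props(2) one321_pos_iff assms by metis
  show "\<exists>i<t. y \<le> p!i"
  proof (cases "j = t")
    case True then show ?thesis using ij q_at q_before[of i] by (intro exI[of _ i]) auto
  next
    case False
    then have "j < t" using ij by simp
    show ?thesis
    proof (rule ccontr)
      assume "\<not> ?thesis"
      moreover have "i < t" using ij(1) \<open>j < t\<close> by simp
      ultimately have "q!i < q!t" using q_before[of i] q_at by auto
      then show False
        using q_contains_3241I[of i j t "Suc t"] ij \<open>j < t\<close> tn assms q_no_3241 by simp
    qed
  qed
  then obtain i0 where i0: "i0 < t" "y \<le> p!i0" by blast
  fix k assume k: "t < k" "k < n"
  show "y \<le> p!k"
  proof (rule ccontr)
    assume "\<not> y \<le> p!k"
    then have "one321_pos q (Suc k)" unfolding one321_pos_iff length_q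
      using k i0 q_before[OF i0(1)] q_at q_after[of "Suc k"] by (intro exI[of _ i0] exI[of _ t]) auto
    then show False using last1_q_props(3) k assms by fastforce
  qed
qed

lemma last1_le_t_if_last1_q_Suc: "L = Suc t \<Longrightarrow> c321 \<Longrightarrow> l \<le> t"
  using last1_q_props(3)[OF one321_pos_shift[OF last1_props(2)]] unfolding shift_def
  by (auto split: if_splits)

lemma not_after_a_if_last1_q_Suc:
  assumes "L = Suc t"
  shows "\<not> after_a y"
proof
  assume H: "after_a y"
  then have c: c321 by simp
  obtain i where i: "i < pos_b" "b < p!i" using larger_before_pos_b[OF c] .
  have bt: "pos_b < t" using pos_b_props(1)[OF c] last1_le_t_if_last1_q_Suc[OF assms c] by simp
  note facts = last1_q_Suc_props[OF assms]
  have "q!pos_b < q!i" "q!t < q!pos_b" "q!(Suc t) < q!t"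
    using q_before[OF bt] q_before[of i] i bt q_at H q_after[of "Suc t"] facts(1,2) by auto
  then show False using q_contains_4321I[of i pos_b t "Suc t"] i bt facts(1) q_no_4321 by simp
qed

lemma y_eq_Suc_b_if_last1_q_Suc:
  assumes "L = Suc t" c321 "l = t"
  shows "y = Suc b"
proof -
  note facts = last1_q_Suc_props[OF assms(1)]
  have b_lt_y: "b < y" using not_after_a_if_last1_q_Suc[OF assms(1)] facts(2) assms by auto
  show ?thesis
  proof (rule ccontr)
    assume "y \<noteq> Suc b"
    then have Sb_lt: "Suc b < y" using b_lt_y by simp
    obtain r where r: "r < n" "p!r = Suc b" using nth_surj[of "Suc b"] b_less_length[OF assms(2)] by auto
    have bl: "pos_b < l" "a < b" using pos_b_props[OF assms(2)] by auto
    \<comment> \<open>b + 1 is not b, not a, not between them (those entries are below a) and not right of y\<close>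
    have "r < pos_b"
      using less_a_between_b_and_a[OF assms(2), of r] facts(4)[of r] r Sb_lt bl assms(3)
      by (metis Suc_lessD leD lessI linorder_neqE_nat not_less_eq)
    then have "q!pos_b < q!r" "q!r < q!t" "q!(Suc t) < q!pos_b"
      using q_before[of r] q_before[of pos_b] q_at q_after[of "Suc t"] r bl assms(3) facts(1) Sb_lt
      by auto
    then show False
      using q_contains_3241I[of r pos_b t "Suc t"] \<open>r < pos_b\<close> bl assms(3) facts(1) q_no_3241 by simp
  qed
qed

lemma peak_set_if_last1_q_Suc:
  assumes "L = Suc t"
  shows "y \<in> peak_set p"
proof -
  note facts = last1_q_Suc_props[OF assms]
  obtain i0 where i0: "i0 < t" "y \<le> p!i0" using facts(3) by blast
  have yn: "y \<le> n" using i0 nth_bounds[of i0] facts(1) by simp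
  show ?thesis
  proof (cases c321)
    case False
    then show ?thesis using peak_set_no_321 yn facts(1,2) nth_bounds[of t] by auto
  next
    case c: True
    consider "l = t" | "l < t" using last1_le_t_if_last1_q_Suc[OF assms c] by linarith
    then show ?thesis
    proof cases
      case 1
      then show ?thesis using y_eq_Suc_b_if_last1_q_Suc[OF assms c] peak_set_321[OF c] facts(2) by auto
    next
      case 2
      have nl: "non_lrmax_pos p t" using i0 facts(2) unfolding non_lrmax_pos_def by auto
      then have hc: has_c and ct: "pos_c \<le> t" using 2 facts(1) pos_c_le[of t] by auto
      have "p!pos_c < y"
      proof (rule ccontr)
        assume "\<not> p!pos_c < y"
        moreover obtain k' where "k' < pos_c" "p!pos_c < p!k'"
          using pos_c_props[OF hc] unfolding non_lrmax_pos_def by blast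
        moreover have "pos_c \<noteq> t" using calculation facts(2) by auto
        ultimately show False
          using q_contains_4321I[of k' pos_c t "Suc t"] q_no_4321 ct q_before[of k'] q_before[of pos_c]
            q_at q_after[of "Suc t"] facts(1,2) by fastforce
      qed
      then show ?thesis using peak_set_321[OF c] hc yn by auto
    qed
  qed
qed

lemma peak_set_and_admissible: "y \<in> peak_set p \<and> admissible y t"
proof (cases "L = t")
  case True
  then have "after_a y" "t = Suc l" using last1_q_at_t by auto
  then show ?thesis using peak_set_321 unfolding admissible_def by auto
next
  case False
  then have L: "L = Suc t" using last1_q_cases by simp
  note facts = last1_q_Suc_props[OF L]
  have "non_lrmax_pos p t" using facts(2,3) unfolding non_lrmax_pos_def by auto
  then show ?thesis
    using peak_set_if_last1_q_Suc[OF L] facts last1_le_t_if_last1_q_Suc[OF L]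
      not_after_a_if_last1_q_Suc[OF L] unfolding admissible_def by auto
qed

end

locale admissible_insertion = insertion +
  assumes admissible: "admissible y t"
    and y_in_peak_set: "y \<in> peak_set p"
begin

lemma y_ge_2: "2 \<le> y" and y_le_n: "y \<le> n"
  using peak_set_bounds[OF y_in_peak_set] by auto

lemma t_if_after_a: "after_a y \<Longrightarrow> t = Suc l"
  using admissible unfolding admissible_def by auto

lemma not_after_a_props:
  assumes "\<not> after_a y"
  shows "t < n" "c321 \<Longrightarrow> l \<le> t" "non_lrmax_pos p t" "p!t < y"
    "\<And>k. t < k \<Longrightarrow> k < n \<Longrightarrow> non_lrmax_pos p k \<Longrightarrow> y \<le> p!k"
  using admissible assms unfolding admissible_def by auto

lemma large_before_t: "\<exists>i<t. y \<le> p!i"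
proof (cases "after_a y")
  case True
  then show ?thesis using t_if_after_a pos_b_props(1) by (intro exI[of _ pos_b]) auto
next
  case False
  obtain i j where ij: "i < j" "j < n" "y \<le> p!i" "p!j < y"
    using large_before_small y_ge_2 y_le_n by blast
  have "i < t"
  proof (rule ccontr)
    assume "\<not> i < t"
    then have "t < j" "non_lrmax_pos p j" using ij unfolding non_lrmax_pos_def by auto
    then show False using not_after_a_props(5)[OF False] ij by fastforce
  qed
  then show ?thesis using ij by blast
qed

lemma ge_y_after_t:
  assumes "t < k" "k < n"
  shows "y \<le> p!k"
proof (cases "after_a y")
  case True
  then show ?thesis using greater_b_after_last1[of k] t_if_after_a assms by fastforce
next
  case False
  obtain i where "i < t" "y \<le> p!i" using large_before_t by blast
  then show ?thesis
    using not_after_a_props(5)[OF False] assms unfolding non_lrmax_pos_def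
    by (metis leI less_le_trans order.strict_trans)
qed

lemma q_less_y_after_t:
  assumes "t < x" "x \<le> n" "q!x < y"
  shows "x = Suc t" "\<not> after_a y"
proof -
  have px: "p!(x-1) < y" using q_after assms by simp
  then show "x = Suc t" using ge_y_after_t[of "x-1"] assms by fastforce
  then show "\<not> after_a y"
    using px greater_b_after_last1[of t] t_if_after_a assms(2) by fastforce
qed

lemma two_below_y_after_t: "t < x \<Longrightarrow> x < z \<Longrightarrow> z \<le> n \<Longrightarrow> q!x < y \<Longrightarrow> q!z < y \<Longrightarrow> False"
  using q_less_y_after_t(1)[of x] q_less_y_after_t(1)[of z] by simp

lemma below_y_up_to_t:
  assumes "k < t" "y \<le> p!k"
  obtains m where "k < m" "m \<le> t" "m < n" "p!m < y"
proof (cases "after_a y")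
  case True
  then have "t = Suc l" "l < n" "k \<noteq> l" using t_if_after_a last1_props(1) assms(2) by auto
  then show ?thesis using that[of l] assms(1) True by auto
next
  case False
  then show ?thesis using that[of t] assms(1) not_after_a_props[OF False] by auto
qed

lemma y_eq_Suc_b_if_t_eq_last1:
  assumes "\<not> after_a y" c321 "t = l"
  shows "y = Suc b"
proof -
  have "a < y" "b < y" using not_after_a_props(4)[OF assms(1)] assms by auto
  moreover have "y \<le> p!pos_c" if has_c
    using not_after_a_props(5)[OF assms(1)] pos_c_props[OF that] assms(3) by blast
  ultimately show ?thesis using y_in_peak_set peak_set_321[OF assms(2)] by (cases has_c) auto
qed

lemma no_321_with_2_ge_y:
  assumes "\<not> after_a y" "i < j" "j < t" "p!j < p!i" "y \<le> p!j"
  shows False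
proof -
  note f = not_after_a_props[OF assms(1)]
  have c: c321 unfolding contains_321_iff using assms f(1,4)
    by (intro exI[of _ i] exI[of _ j] exI[of _ t]) auto
  have "t = l" using one321_le_last1[OF c assms(2,3) f(1) assms(4)] assms(5) f(2)[OF c] f(4) by simp
  then show False
    using two_before_last1_le_b[OF c assms(2)] assms y_eq_Suc_b_if_t_eq_last1[OF assms(1) c] f(4) by simp
qed

lemma no_321_with_1_at_t:
  assumes "\<not> after_a y" "i < j" "j < t" "p!j < p!i" "p!i < y" "p!t < p!j"
  shows False
proof -
  note f = not_after_a_props[OF assms(1)]
  have c: c321 unfolding contains_321_iff using assms f(1)
    by (intro exI[of _ i] exI[of _ j] exI[of _ t]) auto
  have tl: "t = l" using one321_le_last1[OF c assms(2,3) f(1) assms(4,6)] f(2)[OF c] by simp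
  have yb: "y = Suc b" using y_eq_Suc_b_if_t_eq_last1[OF assms(1) c tl] .
  have bl: "pos_b < l" "l < n" "a < p!j" using pos_b_props[OF c] last1_props(1)[OF c] assms(6) tl by auto
  have "j \<le> pos_b" using pos_b_props(3)[OF c] assms(3) bl tl by simp
  moreover have "j \<noteq> pos_b" using assms(4,5) yb by auto
  ultimately have jb: "j < pos_b" by simp
  \<comment> \<open>as y = b + 1, both p!i and p!j lie below b, and then i, j, b, a form a 3241\<close>
  have "p!j \<le> b" using two_before_last1_le_b[OF c assms(2)] assms(3,4) tl bl by simp
  moreover have "p!j \<noteq> b" "p!i \<noteq> b" using nth_inj[of j pos_b] nth_inj[of i pos_b] jb assms(2) bl by auto
  ultimately have "p!j < b" "p!i < b" using assms(5) yb by simp_all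
  then show False using no_3241[of i j pos_b l] assms(2,4) jb bl by simp
qed

lemma q_less_iff_unshift:
  "x \<le> n \<Longrightarrow> z \<le> n \<Longrightarrow> x \<noteq> t \<Longrightarrow> z \<noteq> t \<Longrightarrow> q!x < q!z \<longleftrightarrow> p!(unshift x) < p!(unshift z)"
  using q_unshift by simp


lemma p_pattern_of_q:
  assumes "i < j" "j \<le> n" "i \<noteq> t" "j \<noteq> t"
  shows "unshift i < unshift j" "unshift j < n"
  using assms unshift_mono q_unshift by auto

lemma q_avoids_4321: "\<not> contains q [4,3,2,1]"
proof
  assume "contains q [4,3,2,1]"
  then obtain i j k m where o: "i<j" "j<k" "k<m" "m \<le> n" "q!j<q!i" "q!k<q!j" "q!m<q!k"
    unfolding contains_4321_iff length_q by auto
  consider (none) "i \<noteq> t" "j \<noteq> t" "k \<noteq> t" "m \<noteq> t" | (ij) "i = t \<or> j = t" | (k) "k = t" | (m) "m = t"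
    by blast
  then show False
  proof cases
    case none
    then have "p!(unshift j) < p!(unshift i)" "p!(unshift k) < p!(unshift j)" "p!(unshift m) < p!(unshift k)"
      using o q_less_iff_unshift[of j i] q_less_iff_unshift[of k j] q_less_iff_unshift[of m k] by simp_all
    then show False using no_4321 p_pattern_of_q[of i j] p_pattern_of_q[of j k] p_pattern_of_q[of k m]
      none o by simp
  next
    case ij
    then have "t < k" "q!k < y" "q!m < y" using o q_at by auto
    then show False using two_below_y_after_t[of k m] o by simp
  next
    case k
    then have "m = Suc t" "\<not> after_a y" using q_less_y_after_t[of m] o q_at by auto
    then show False using no_321_with_2_ge_y[of i j] o k q_before[of i] q_before[of j] q_at by simp
  next
    case m
    then have "p!j < p!i" "p!k < p!j" "y \<le> p!k" using o q_before q_at by auto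
    moreover obtain m' where "k < m'" "m' < n" "p!m' < y" using below_y_up_to_t[of k] o m calculation by auto
    ultimately show False using no_4321[of i j k m'] o by simp
  qed
qed

lemma q_avoids_3241: "\<not> contains q [3,2,4,1]"
proof
  assume "contains q [3,2,4,1]"
  then obtain i j k m where o: "i<j" "j<k" "k<m" "m \<le> n" "q!j<q!i" "q!i<q!k" "q!m<q!j"
    unfolding contains_3241_iff length_q by auto
  consider (none) "i \<noteq> t" "j \<noteq> t" "k \<noteq> t" "m \<noteq> t" | (i) "i = t" | (j) "j = t" | (k) "k = t" | (m) "m = t"
    by blast
  then show False
  proof cases
    case none
    then have "p!(unshift j) < p!(unshift i)" "p!(unshift i) < p!(unshift k)" "p!(unshift m) < p!(unshift j)"
      using o q_less_iff_unshift[of j i] q_less_iff_unshift[of i k] q_less_iff_unshift[of m j] by simp_all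
    then show False using no_3241 p_pattern_of_q[of i j] p_pattern_of_q[of j k] p_pattern_of_q[of k m]
      none o by simp
  next
    case i
    then have "t < j" "q!j < y" "q!m < y" using o q_at by auto
    then show False using two_below_y_after_t[of j m] o by simp
  next
    case j
    \<comment> \<open>the only entry right of y that is below y comes immediately after it, leaving no room for the 4\<close>
    then show False using q_less_y_after_t(1)[of m] o q_at by simp
  next
    case k
    then have "m = Suc t" "\<not> after_a y" using q_less_y_after_t[of m] o q_at by auto
    then show False
      using no_321_with_1_at_t[of i j] o k q_before[of i] q_before[of j] q_at q_after[of m] by simp
  next
    case m
    then have "p!j < p!i" "p!i < p!k" "y \<le> p!j" using o q_before q_at by auto
    moreover obtain m' where "k < m'" "m' < n" "p!m' < y"
      using below_y_up_to_t[of k] o m calculation by auto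
    ultimately show False using no_3241[of i j k m'] o by simp
  qed
qed

lemma q_no_split_up_to_t:
  assumes "1 \<le> K" "K \<le> t" and split: "\<And>i j. i < K \<Longrightarrow> K \<le> j \<Longrightarrow> j \<le> n \<Longrightarrow> q!i < q!j"
  shows False
proof (cases "K < n")
  case True
  have "p!i < p!j" if "i < K" "K \<le> j" "j < n" for i j
  proof -
    have "q!i < q!(shift j)" using split[of i "shift j"] le_shift[of j] shift_le[of j] that by simp
    then show ?thesis using q_before[of i] q_shift[of j] that assms(2) by simp
  qed
  then show False using no_split[of K] assms(1) True by blast
next
  case False
  \<comment> \<open>then y is the last entry and would have to be the maximum n + 1\<close>
  then have "K = n" "t = n" using assms t_le by auto
  obtain r where "r < n" "p!r = n" using nth_surj[of n] length_pos by auto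
  then show False using split[of r t] q_before[of r] q_at \<open>K = n\<close> \<open>t = n\<close> y_le_n by simp
qed

lemma q_no_split_after_t:
  assumes "t < K" "K \<le> n" and split: "\<And>i j. i < K \<Longrightarrow> K \<le> j \<Longrightarrow> j \<le> n \<Longrightarrow> q!i < q!j"
  shows False
proof (cases "K = 1")
  case True
  \<comment> \<open>then y is the first entry and would have to be the minimum 1\<close>
  obtain r where "r < n" "p!r = 1" using nth_surj[of 1] length_pos by auto
  moreover have "t = 0" using True assms(1) by simp
  ultimately have "q!0 < q!(shift r)" "q!(shift r) = 1" "q!0 = y"
    using split[of 0 "shift r"] shift_after[of r] shift_le[of r] q_shift[of r] q_at True y_ge_2
    unfolding bump_def by auto
  then show False using y_ge_2 by simp
next
  case False
  have "p!i < p!j" if "i < K - 1" "K - 1 \<le> j" "j < n" for i j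
  proof -
    have "shift i < K" "K \<le> shift j" using shift_le_Suc[of i] shift_after[of j] that assms by auto
    then have "q!(shift i) < q!(shift j)" using split shift_le[of j] that by simp
    then show ?thesis using q_shift[of i] q_shift[of j] that by simp
  qed
  then show False using no_split[of "K - 1"] assms False by fastforce
qed

lemma q_indecomposable: "indecomposable q"
proof -
  have perm: "is_perm q" unfolding q_def using is_perm_ins[OF is_perm y_pos y_le t_le] .
  have False if "1 \<le> K" "K < Suc n" "set (take K q) = {1..K}" for K
  proof -
    have split: "\<And>i j. i < K \<Longrightarrow> K \<le> j \<Longrightarrow> j \<le> n \<Longrightarrow> q!i < q!j"
      using is_perm_take_eq_iff[OF perm, of K] that length_q by auto
    show False
    proof (cases "K \<le> t")
      case True show False by (rule q_no_split_up_to_t[OF that(1) True]) (fact split)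
    next
      case False
      show False by (rule q_no_split_after_t[of K]) (use False that(2) split in auto)
    qed
  qed
  then show ?thesis unfolding indecomposable_def using perm length_q by auto
qed

lemma q_avoider: "avoider q"
  unfolding avoider_def using q_indecomposable q_avoids_4321 q_avoids_3241 by simp


lemma one321_pos_q_new:
  "one321_pos q (if after_a y then t else Suc t)"
proof (cases "after_a y")
  case True
  obtain i where i: "i < pos_b" "b < p!i" using larger_before_pos_b True by blast
  have "pos_b < t" using pos_b_props(1) True t_if_after_a by simp
  then show ?thesis unfolding one321_pos_iff length_q
    using True i q_before[of pos_b] q_before[of i] q_at t_le by (intro exI[of _ i] exI[of _ pos_b]) auto
next
  case False
  obtain i0 where "i0 < t" "y \<le> p!i0" using large_before_t by blast
  then show ?thesis unfolding one321_pos_iff length_q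
    using False q_before[of i0] q_at q_after[of "Suc t"] not_after_a_props[OF False]
    by (intro exI[of _ i0] exI[of _ t]) auto
qed

lemma one321_pos_q_le:
  assumes "one321_pos q x"
  shows "x \<le> (if after_a y then t else Suc t)"
proof (rule ccontr)
  assume beyond: "\<not> ?thesis"
  obtain i j where o: "i<j" "j<x" "x \<le> n" "q!j<q!i" "q!x<q!j"
    using assms unfolding one321_pos_iff length_q by auto
  have xt: "t < x" "x \<noteq> t" using beyond by (auto split: if_splits)
  have "\<not> q!x < y" using q_less_y_after_t[OF xt(1) o(3)] beyond by auto
  moreover have "q!x \<noteq> y" using q_eq_y xt o(3) by auto
  ultimately have "y < q!x" by simp
  then have "i \<noteq> t" "j \<noteq> t" using o q_at by auto
  then have "unshift i < unshift j" "unshift j < unshift x" "unshift x < n"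
    "p!(unshift j) < p!(unshift i)" "p!(unshift x) < p!(unshift j)"
    using o xt unshift_mono q_unshift[of x] q_less_iff_unshift[of j i] q_less_iff_unshift[of x j] by auto
  then have c: c321 and "unshift x \<le> l"
    using one321_le_last1 unfolding contains_321_iff by blast+
  moreover have "l < unshift x"
    using beyond xt unshift_after[of x] t_if_after_a not_after_a_props(2)[OF _ c]
    by (auto split: if_splits)
  ultimately show False by simp
qed

lemma q_contains_321: "contains q [3,2,1]"
  using one321_pos_q_new unfolding one321_pos_iff contains_321_iff by blast

lemma last1_pos_q: "last1_pos q = (if after_a y then t else Suc t)"
  using last1_pos_eqI[OF q_contains_321 one321_pos_q_new one321_pos_q_le] .

lemma peak_blue_q: "peak_blue q = y"
proof (cases "after_a y")
  case True
  then have "q!(t-1) = a" using q_before[of l] t_if_after_a unfolding bump_def by simp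
  then show ?thesis unfolding peak_blue_def last1_pos_q using True q_at by simp
next
  case False
  then have "q!(Suc t) = p!t" "p!t < y"
    using q_after[of "Suc t"] not_after_a_props[OF False] unfolding bump_def by auto
  then show ?thesis unfolding peak_blue_def using last1_pos_q False q_at by auto
qed

lemma blue_pos_q_t: "blue_pos q t"
proof (cases "after_a y")
  case True
  obtain i where i: "i < pos_b" "b < p!i" using larger_before_pos_b True by blast
  have "pos_b < l" "l < t" using pos_b_props(1) True t_if_after_a by auto
  then have "q!pos_b < q!i" "q!t < q!pos_b" "q!l < q!t"
    using q_before[of l] q_before[of pos_b] q_before[of i] q_at i True by auto
  then show ?thesis unfolding blue_pos_iff length_q using i(1) \<open>pos_b < l\<close> \<open>l < t\<close> t_le
    by (intro disjI2 exI[of _ i] exI[of _ pos_b] exI[of _ l]) auto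
next
  case False
  obtain i0 where "i0 < t" "y \<le> p!i0" using large_before_t by blast
  then show ?thesis unfolding blue_pos_iff length_q
    using False q_before[of i0] q_at q_after[of "Suc t"] not_after_a_props[OF False]
    by (intro disjI1 exI[of _ i0] exI[of _ "Suc t"]) auto
qed

lemma blue_321_unshift:
  assumes "x \<le> n" "x \<noteq> t" "i < x" "x < k" "k \<le> n" "q!x < q!i" "q!k < q!x"
  shows "blue_pos p (unshift x)"
proof -
  consider (none) "i \<noteq> t" "k \<noteq> t" | (i) "i = t" | (k) "k = t" by blast
  then show ?thesis
  proof cases
    case none
    then have "unshift i < unshift x" "unshift x < unshift k" "unshift k < n"
      "p!(unshift x) < p!(unshift i)" "p!(unshift k) < p!(unshift x)"
      using assms unshift_mono q_unshift[of k] q_less_iff_unshift[of x i] q_less_iff_unshift[of k x]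
      by auto
    then show ?thesis unfolding blue_pos_iff by blast
  next
    case i
    then show ?thesis using two_below_y_after_t[of x k] assms q_at by auto
  next
    case k
    then have "p!x < p!i" "y \<le> p!x" "unshift x = x"
      using assms q_before[of i] q_before[of x] q_at unshift_before by auto
    moreover obtain m where "x < m" "m < n" "p!m < y" using below_y_up_to_t[of x] assms k calculation by auto
    ultimately show ?thesis unfolding blue_pos_iff using assms by (intro disjI1 exI[of _ i] exI[of _ m]) auto
  qed
qed

lemma blue_4312_unshift:
  assumes "x \<le> n" "x \<noteq> t" "i < j" "j < k" "k < x" "q!j < q!i" "q!x < q!j" "q!k < q!x"
  shows "blue_pos p (unshift x)"
proof -
  consider (none) "i \<noteq> t" "j \<noteq> t" "k \<noteq> t" | (ij) "i = t \<or> j = t" | (k) "k = t" by blast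
  then show ?thesis
  proof cases
    case none
    then have "unshift i < unshift j" "unshift j < unshift k" "unshift k < unshift x" "unshift x < n"
      "p!(unshift j) < p!(unshift i)" "p!(unshift x) < p!(unshift j)" "p!(unshift k) < p!(unshift x)"
      using assms unshift_mono q_unshift[of x] q_less_iff_unshift[of j i] q_less_iff_unshift[of x j]
        q_less_iff_unshift[of k x] by auto
    then show ?thesis unfolding blue_pos_iff by blast
  next
    case ij
    then have "t < k" "q!k < y" "q!x < y" using assms q_at by auto
    then show ?thesis using two_below_y_after_t[of k x] assms by simp
  next
    case k
    then have jt: "i < t" "j < t" "t < x" using assms by auto
    then have ux: "t \<le> unshift x" "unshift x < n" "q!x = bump y (p!(unshift x))"
      using unshift_after[of x] q_unshift[of x] assms by auto
    have qij: "q!i = bump y (p!i)" "q!j = bump y (p!j)" using q_before jt by auto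
    have "p!j < p!i" using assms(6) qij by simp
    moreover have "p!(unshift x) < p!j" using assms(7) qij ux(3) by simp
    moreover have "y \<le> p!(unshift x)" using assms(8) k q_at ux(3) by simp
    moreover have "y \<le> p!j" using calculation by linarith
    then obtain m where "j < m" "m \<le> t" "m < n" "p!m < y" by (rule below_y_up_to_t[OF jt(2)])
    moreover note \<open>y \<le> p!(unshift x)\<close>
    moreover have "m < unshift x"
    proof -
      have "m \<noteq> unshift x" using calculation by auto
      then show ?thesis using \<open>m \<le> t\<close> ux(1) by linarith
    qed
    ultimately show ?thesis unfolding blue_pos_iff
      using assms(3) ux(2) by (intro disjI2 exI[of _ i] exI[of _ j] exI[of _ m]) auto
  qed
qed

lemma blue_pos_unshift:
  assumes "x \<le> n" "x \<noteq> t" "blue_pos q x"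
  shows "blue_pos p (unshift x)"
proof -
  from assms(3) consider
      (two_of_321) i k where "i < x" "x < k" "k < Suc n" "q!x < q!i" "q!k < q!x"
    | (two_of_4312) i j k where "i < j" "j < k" "k < x" "q!j < q!i" "q!x < q!j" "q!k < q!x"
    unfolding blue_pos_iff length_q by blast
  then show ?thesis
  proof cases
    case two_of_321
    then show ?thesis using blue_321_unshift[OF assms(1,2)] by simp
  next
    case two_of_4312
    then show ?thesis using blue_4312_unshift[OF assms(1,2)] by blast
  qed
qed

lemma blue_positions_q:
  "{j. j < length q \<and> blue_pos q j} = insert t (shift ` {k. k < n \<and> blue_pos p k})"
proof
  show "{j. j < length q \<and> blue_pos q j} \<subseteq> insert t (shift ` {k. k < n \<and> blue_pos p k})"
  proof
    fix x assume "x \<in> {j. j < length q \<and> blue_pos q j}"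
    then have x: "x \<le> n" "blue_pos q x" using length_q by auto
    show "x \<in> insert t (shift ` {k. k < n \<and> blue_pos p k})"
    proof (cases "x = t")
      case False
      then have "blue_pos p (unshift x)" "unshift x < n" "x = shift (unshift x)"
        using blue_pos_unshift q_unshift shift_unshift x by auto
      then show ?thesis by blast
    qed simp
  qed
  show "insert t (shift ` {k. k < n \<and> blue_pos p k}) \<subseteq> {j. j < length q \<and> blue_pos q j}"
    using blue_pos_q_t t_le blue_pos_shift shift_le length_q by (auto simp: less_Suc_eq_le)
qed

lemma num_blue_q: "num_blue q = Suc (num_blue p)"
proof -
  have "t \<notin> shift ` {k. k < n \<and> blue_pos p k}" using shift_neq by (metis imageE)
  then have "num_blue q = Suc (card (shift ` {k. k < n \<and> blue_pos p k}))"
    unfolding num_blue_def blue_positions_q by simp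
  also have "card (shift ` {k. k < n \<and> blue_pos p k}) = num_blue p"
    unfolding num_blue_def using card_image inj_on_subset[OF shift_inj] by blast
  finally show ?thesis .
qed

end

context avoider_perm
begin

lemma peak_insertion_admissible:
  assumes "y \<in> {1..n + 1}" "i \<in> {1..n + 1}" "avoider (ins p i y)"
    "contains (ins p i y) [3,2,1]" "peak_blue (ins p i y) = y"
  shows "y \<in> peak_set p \<and> admissible y (i - 1)"
proof -
  interpret insertion p y "i - 1" using assms by unfold_locales auto
  have "q = ins p i y" unfolding q_def using assms(2) by simp
  interpret peak_insertion p y "i - 1"
    using assms \<open>q = ins p i y\<close> unfolding avoider_def by unfold_locales auto
  show ?thesis by (rule peak_set_and_admissible)
qed

lemma admissible_peak_insertion:
  assumes "y \<in> peak_set p" "t \<le> n" "admissible y t"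
  shows "avoider (ins p (Suc t) y) \<and> contains (ins p (Suc t) y) [3,2,1] \<and>
    peak_blue (ins p (Suc t) y) = y \<and> num_blue (ins p (Suc t) y) = num_blue p + 1"
proof -
  interpret admissible_insertion p y t
    using assms peak_set_bounds[OF assms(1)] by unfold_locales auto
  show ?thesis using q_avoider q_contains_321 peak_blue_q num_blue_q unfolding q_def by simp
qed

end

theorem proposition8:
  fixes p :: "nat list"
  assumes "avoider p"
  shows "(\<forall>y \<in> peak_set p. \<exists>!i. i \<in> {1..length p + 1} \<and>
            avoider (ins p i y) \<and> contains (ins p i y) [3,2,1] \<and>
            peak_blue (ins p i y) = y \<and> num_blue (ins p i y) = num_blue p + 1) \<and>
         (\<forall>y \<in> {1..length p + 1} - peak_set p. \<not> (\<exists>i \<in> {1..length p + 1}.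
            avoider (ins p i y) \<and> contains (ins p i y) [3,2,1] \<and>
            peak_blue (ins p i y) = y \<and> num_blue (ins p i y) = num_blue p + 1))"
proof -
  interpret avoider_perm p using assms by unfold_locales
  show ?thesis
  proof (intro conjI ballI)
    fix y assume y: "y \<in> peak_set p"
    obtain t where t: "t \<le> n" "admissible y t" using admissible_exists[OF y] by blast
    show "\<exists>!i. i \<in> {1..n + 1} \<and> avoider (ins p i y) \<and> contains (ins p i y) [3,2,1] \<and>
        peak_blue (ins p i y) = y \<and> num_blue (ins p i y) = num_blue p + 1"
    proof (rule ex1I[of _ "Suc t"])
      fix i assume i: "i \<in> {1..n + 1} \<and> avoider (ins p i y) \<and> contains (ins p i y) [3,2,1] \<and>
        peak_blue (ins p i y) = y \<and> num_blue (ins p i y) = num_blue p + 1"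
      then have "admissible y (i - 1)" using peak_insertion_admissible peak_set_bounds[OF y] by auto
      then show "i = Suc t" using admissible_unique[OF _ t(2)] i by fastforce
    qed (use admissible_peak_insertion[OF y t(1,2)] t(1) in simp)
  qed (use peak_insertion_admissible in blast)
qed

end
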